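(* Let $p_0\ge 2$ be a real number, $\theta=\pi/p_0$, let $N$ be an even positive integer, $u\in\mathbb{C}$, $m\in\{0,1,\dots,N/2\}$, and let $\omega_1,\dots,\omega_m$ be a solution of the Bethe ansatz equations $$-\Biggl(\frac{\sinh\frac{\theta}{2}\bigl(\omega_j+i(u+2)\bigr)\sinh\frac{\theta}{2}(\omega_j-iu)}{\sinh\frac{\theta}{2}\bigl(\omega_j-i(u+2)\bigr)\sinh\frac{\theta}{2}(\omega_j+iu)}\Biggr)^{N/2}=\frac{Q(\omega_j+2i)}{Q(\omega_j-2i)},\qquad j=1,\dots,m,$$ where $Q(v)=\prod_{k=1}^m\sinh\frac{\theta}{2}(v-\omega_k)$. For integers $n\ge 0$ define the meromorphic function of $v$ $$T_{n-1}(v)=\sum_{j=1}^{n}\phi\bigl(v-i(u+n+2-2j)\bigr)\,\phi\bigl(v+i(u-n+2j)\bigr)\,\frac{Q(v+in)\,Q(v-in)}{Q\bigl(v+i(2j-n)\bigr)\,Q\bigl(v+i(2j-n-2)\bigr)},\qquad \phi(v)=\Bigl(\frac{\sinh\frac{\theta}{2}v}{\sin\theta}\Bigr)^{N/2}$$ (so $T_{-1}\equiv 0$). Then for all integers $n\ge y\ge 1$ and all $v\in\mathbb{C}$ (as an identity of meromorphic functions) $$T_{n-1}(v+iy)\,T_{n-1}(v-iy)=T_{n+y-1}(v)\,T_{n-y-1}(v)+T_{y-1}(v+in)\,T_{y-1}(v-in).$$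
   Context: These $T_{n-1}(v)$ (with the dependence on $u$ suppressed) are the eigenvalues, in dressed vacuum form, of the fusion hierarchy of quantum transfer matrices of the six-vertex model associated with the spin-$\frac12$ XXZ chain with anisotropy $\Delta=\cos\theta$; here $\sinh$ denotes the hyperbolic sine. *)

theory Defs
  imports Complex_Main
begin

definition Qf :: "real \<Rightarrow> nat \<Rightarrow> (nat \<Rightarrow> complex) \<Rightarrow> complex \<Rightarrow> complex" where
  "Qf \<theta> m \<omega> v = (\<Prod>k=1..m. sinh (complex_of_real (\<theta>/2) * (v - \<omega> k)))"

definition phif :: "real \<Rightarrow> nat \<Rightarrow> complex \<Rightarrow> complex" where
  "phif \<theta> N v = (sinh (complex_of_real (\<theta>/2) * v) / complex_of_real (sin \<theta>)) ^ (N div 2)"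

text \<open>Tf theta N m omega u n v is T_{n-1}(v) of the paper (so Tf ... 0 v = T_{-1}(v) = 0).\<close>
definition Tf :: "real \<Rightarrow> nat \<Rightarrow> nat \<Rightarrow> (nat \<Rightarrow> complex) \<Rightarrow> complex \<Rightarrow> nat \<Rightarrow> complex \<Rightarrow> complex" where
  "Tf \<theta> N m \<omega> u n v =
     (\<Sum>j=1..n. phif \<theta> N (v - \<i> * (u + of_nat n + 2 - 2 * of_nat j))
               * phif \<theta> N (v + \<i> * (u - of_nat n + 2 * of_nat j))
               * (Qf \<theta> m \<omega> (v + \<i> * of_nat n) * Qf \<theta> m \<omega> (v - \<i> * of_nat n))
               / (Qf \<theta> m \<omega> (v + \<i> * of_int (2 * int j - int n))
                  * Qf \<theta> m \<omega> (v + \<i> * of_int (2 * int j - int n - 2))))"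

end

theory Submission
  imports Defs
begin

text \<open>
  In dressed vacuum form every summand of \<open>T\<^sub>n\<^sub>-\<^sub>1(v)\<close> is \<open>Q(v+in) Q(v-in)\<close> times one common
  function \<open>g\<close> evaluated on the lattice \<open>v + i(2j - n - 1)\<close>, \<open>j = 1..n\<close>.  Along the
  line \<open>v + i\<int>\<close> the fusion relation therefore reduces to an identity between products of
  sums of \<open>g\<close> over windows of step 2: the windows of \<open>T\<^sub>n\<^sub>-\<^sub>1(v \<plusminus> iy)\<close> split into pieces
  \<open>X, Y, Z\<close> with \<open>(Y + Z)(X + Y) = (X + Y + Z) Y + Z X\<close>, and the \<open>Q\<close>-prefactors match.
  The identity is purely algebraic; the Bethe ansatz equations (which make \<open>T\<close> entire)
  and the genericity of \<open>v\<close> are not needed, and the junk value \<open>x / 0 = 0\<close> is harmless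
  because both sides are built from the same quotients.
\<close>

definition window_sum :: "(int \<Rightarrow> 'a::comm_monoid_add) \<Rightarrow> int \<Rightarrow> nat \<Rightarrow> 'a" where
  "window_sum h a l = (\<Sum>j<l. h (a + 2 * int j))"

lemma window_sum_add:
  "window_sum h a (p + q) = window_sum h a p + window_sum h (a + 2 * int p) q"
  by (induction q) (simp_all add: window_sum_def algebra_simps)

definition dressed_T :: "(int \<Rightarrow> 'a::comm_ring) \<Rightarrow> (int \<Rightarrow> 'a) \<Rightarrow> nat \<Rightarrow> int \<Rightarrow> 'a" where
  "dressed_T Q h l c = Q (c + int l) * Q (c - int l) * window_sum h (c - int l + 1) l"

lemma dressed_T_fusion:
  assumes "y \<le> n"
  shows "dressed_T Q h n (int y) * dressed_T Q h n (- int y)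
       = dressed_T Q h (n + y) 0 * dressed_T Q h (n - y) 0
         + dressed_T Q h y (int n) * dressed_T Q h y (- int n)"
proof -
  have n_minus_y: "int (n - y) = int n - int y"
    using assms by simp
  define X where "X = window_sum h (- int y - int n + 1) y"
  define Y where "Y = window_sum h (int y - int n + 1) (n - y)"
  define Z where "Z = window_sum h (int n - int y + 1) y"
  have XY: "window_sum h (- int y - int n + 1) n = X + Y"
    using window_sum_add[of h "- int y - int n + 1" y "n - y"] assms
    by (simp add: X_def Y_def algebra_simps)
  have YZ: "window_sum h (int y - int n + 1) n = Y + Z"
    using window_sum_add[of h "int y - int n + 1" "n - y" y] assms
    by (simp add: Y_def Z_def n_minus_y algebra_simps)
  have XYZ: "window_sum h (- int y - int n + 1) (n + y) = X + Y + Z"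
    using window_sum_add[of h "- int y - int n + 1" n y] XY
    by (simp add: Z_def algebra_simps)
  define q1 q2 q3 q4
    where "q1 = Q (int n + int y)" and "q2 = Q (int n - int y)"
      and "q3 = Q (int y - int n)" and "q4 = Q (- int y - int n)"
  have "int y + int n = int n + int y" and "- int y + int n = int n - int y"
    and "0 + int (n + y) = int n + int y" and "0 - int (n + y) = - int y - int n"
    and "0 + int (n - y) = int n - int y" and "0 - int (n - y) = int y - int n"
    and "- int n + int y = int y - int n" and "- int n - int y = - int y - int n"
    using assms by simp_all
  then have "dressed_T Q h n (int y) = q1 * q3 * (Y + Z)"
    and "dressed_T Q h n (- int y) = q2 * q4 * (X + Y)"
    and "dressed_T Q h (n + y) 0 = q1 * q4 * (X + Y + Z)"
    and "dressed_T Q h (n - y) 0 = q2 * q3 * Y"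
    and "dressed_T Q h y (int n) = q1 * q2 * Z"
    and "dressed_T Q h y (- int n) = q3 * q4 * X"
    unfolding dressed_T_def q1_def q2_def q3_def q4_def
    by (simp_all only: XY YZ XYZ flip: X_def Y_def Z_def)
  then show ?thesis
    by (simp add: algebra_simps)
qed

definition dressed_summand ::
    "real \<Rightarrow> nat \<Rightarrow> nat \<Rightarrow> (nat \<Rightarrow> complex) \<Rightarrow> complex \<Rightarrow> complex \<Rightarrow> complex" where
  "dressed_summand \<theta> N m \<omega> u x =
     phif \<theta> N (x - \<i> * (u + 1)) * phif \<theta> N (x + \<i> * (u + 1))
     / (Qf \<theta> m \<omega> (x + \<i>) * Qf \<theta> m \<omega> (x - \<i>))"

lemma Tf_eq_dressed_T:
  "Tf \<theta> N m \<omega> u l (v + \<i> * of_int c)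
     = dressed_T (\<lambda>k. Qf \<theta> m \<omega> (v + \<i> * of_int k))
                 (\<lambda>k. dressed_summand \<theta> N m \<omega> u (v + \<i> * of_int k)) l c"
  unfolding Tf_def dressed_T_def window_sum_def sum_distrib_left
    One_nat_def sum.atLeast1_atMost_eq
proof (rule sum.cong[OF refl])
  fix j
  define x where "x = v + \<i> * of_int (c - int l + 1 + 2 * int j)"
  have shifts: "v + \<i> * of_int c - \<i> * (u + of_nat l + 2 - 2 * of_nat (Suc j)) = x - \<i> * (u + 1)"
    "v + \<i> * of_int c + \<i> * (u - of_nat l + 2 * of_nat (Suc j)) = x + \<i> * (u + 1)"
    "v + \<i> * of_int c + \<i> * of_nat l = v + \<i> * of_int (c + int l)"
    "v + \<i> * of_int c - \<i> * of_nat l = v + \<i> * of_int (c - int l)"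
    "v + \<i> * of_int c + \<i> * of_int (2 * int (Suc j) - int l) = x + \<i>"
    "v + \<i> * of_int c + \<i> * of_int (2 * int (Suc j) - int l - 2) = x - \<i>"
    unfolding x_def by (simp_all add: algebra_simps)
  show "phif \<theta> N (v + \<i> * of_int c - \<i> * (u + of_nat l + 2 - 2 * of_nat (Suc j)))
      * phif \<theta> N (v + \<i> * of_int c + \<i> * (u - of_nat l + 2 * of_nat (Suc j)))
      * (Qf \<theta> m \<omega> (v + \<i> * of_int c + \<i> * of_nat l) * Qf \<theta> m \<omega> (v + \<i> * of_int c - \<i> * of_nat l))
      / (Qf \<theta> m \<omega> (v + \<i> * of_int c + \<i> * of_int (2 * int (Suc j) - int l))
         * Qf \<theta> m \<omega> (v + \<i> * of_int c + \<i> * of_int (2 * int (Suc j) - int l - 2)))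
    = Qf \<theta> m \<omega> (v + \<i> * of_int (c + int l)) * Qf \<theta> m \<omega> (v + \<i> * of_int (c - int l))
      * dressed_summand \<theta> N m \<omega> u (v + \<i> * of_int (c - int l + 1 + 2 * int j))"
    unfolding shifts dressed_summand_def x_def[symmetric] by (simp add: ac_simps)
qed

theorem mainTheorem1:
  fixes p0 \<theta> :: real and N m n y :: nat and u v :: complex and \<omega> :: "nat \<Rightarrow> complex"
  assumes "p0 \<ge> 2" and "\<theta> = pi / p0"
    and "even N" and "N > 0"
    and "m \<le> N div 2"
    and BAE_nondeg: "\<forall>j\<in>{1..m}.
           sinh (complex_of_real (\<theta>/2) * (\<omega> j - \<i> * (u + 2)))
             * sinh (complex_of_real (\<theta>/2) * (\<omega> j + \<i> * u)) \<noteq> 0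
           \<and> Qf \<theta> m \<omega> (\<omega> j - 2 * \<i>) \<noteq> 0"
    and BAE: "\<forall>j\<in>{1..m}.
           - (((sinh (complex_of_real (\<theta>/2) * (\<omega> j + \<i> * (u + 2)))
                 * sinh (complex_of_real (\<theta>/2) * (\<omega> j - \<i> * u)))
              / (sinh (complex_of_real (\<theta>/2) * (\<omega> j - \<i> * (u + 2)))
                 * sinh (complex_of_real (\<theta>/2) * (\<omega> j + \<i> * u)))) ^ (N div 2))
           = Qf \<theta> m \<omega> (\<omega> j + 2 * \<i>) / Qf \<theta> m \<omega> (\<omega> j - 2 * \<i>)"
    and "1 \<le> y" and "y \<le> n"
    and v_generic: "\<forall>k::int. Qf \<theta> m \<omega> (v + \<i> * of_int k) \<noteq> 0"
  shows "Tf \<theta> N m \<omega> u n (v + \<i> * of_nat y) * Tf \<theta> N m \<omega> u n (v - \<i> * of_nat y)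
       = Tf \<theta> N m \<omega> u (n + y) v * Tf \<theta> N m \<omega> u (n - y) v
         + Tf \<theta> N m \<omega> u y (v + \<i> * of_nat n) * Tf \<theta> N m \<omega> u y (v - \<i> * of_nat n)"
proof -
  define Q where "Q k = Qf \<theta> m \<omega> (v + \<i> * of_int k)" for k
  define h where "h k = dressed_summand \<theta> N m \<omega> u (v + \<i> * of_int k)" for k
  have T: "Tf \<theta> N m \<omega> u l (v + \<i> * of_int c) = dressed_T Q h l c" for l c
    unfolding Q_def h_def by (rule Tf_eq_dressed_T)
  show ?thesis
    using dressed_T_fusion[OF \<open>y \<le> n\<close>, of Q h]
      T[of n "int y"] T[of n "- int y"] T[of "n + y" 0] T[of "n - y" 0]
      T[of y "int n"] T[of y "- int n"]
    by simp
qed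

end
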